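(* Let $m\ge2$, $n\ge2$, let $c\in\mathbb{R}_{\ge0}^{m\times n}$ and let $B=(B_1,\dots,B_m)$ be any allocation of $[n]$ to $[m]$, with $M=\max_{\ell\in[m]}c_\ell(B_\ell)$. Then there exists an allocation $A=(A_1,\dots,A_m)$ such that (i) $\sum_{i\in[m]}c_i(A_i)\le\frac1m\sum_{i\in[m]}c_i([n])$ and (ii) $\max_{\ell\in[m]}c_\ell(A_\ell)\le\frac32 M$. Moreover, for such $A$, setting $p_i=c_i(A_i)-\frac1m c_i([n])$ for all $i$ yields $c_i(A_i)-p_i\le\frac1m\sum_{j\in[m]}(c_i(A_j)-p_j)$ for all $i\in[m]$.
   Context: Notation: $[k]=\{1,\dots,k\}$. For a cost matrix $c\in\mathbb{R}_{\ge0}^{m\times n}$ (rows = machines, columns = jobs) and $S\subseteq[n]$, $c_i(S)=\sum_{j\in S}c_{i,j}$. An allocation is a tuple $(X_1,\dots,X_m)$ of pairwise disjoint subsets of $[n]$ with union $[n]$. *)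

theory Defs
  imports Complex_Main
begin

text \<open>Machines are indexed by {1..m}, jobs by {1..n}. A cost matrix is
  c :: nat \<Rightarrow> nat \<Rightarrow> real, with c i j the cost of job j on machine i.\<close>

definition cost :: "(nat \<Rightarrow> nat \<Rightarrow> real) \<Rightarrow> nat \<Rightarrow> nat set \<Rightarrow> real" where
  "cost c i S = (\<Sum>j\<in>S. c i j)"

definition is_allocation :: "nat \<Rightarrow> nat \<Rightarrow> (nat \<Rightarrow> nat set) \<Rightarrow> bool" where
  "is_allocation m n X \<longleftrightarrow>
     (\<forall>i\<in>{1..m}. \<forall>k\<in>{1..m}. i \<noteq> k \<longrightarrow> X i \<inter> X k = {}) \<and>
     (\<Union>i\<in>{1..m}. X i) = {1..n}"

definition makespan :: "nat \<Rightarrow> (nat \<Rightarrow> nat \<Rightarrow> real) \<Rightarrow> (nat \<Rightarrow> nat set) \<Rightarrow> real" where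
  "makespan m c X = Max ((\<lambda>l. cost c l (X l)) ` {1..m})"

end

theory Submission
  imports Defs
begin

text \<open>Two machines can trade their bundles so that neither
  load exceeds \<open>3/2 * M\<close> and the pair pays at most what it would pay after swapping the bundles.
  For \<open>r < m\<close>, pairing \<open>a\<close> with the \<open>b\<close> such that \<open>a + b \<equiv> r (mod m)\<close> and trading within
  every pair yields an allocation; over the \<open>m\<close> rounds every ordered pair of machines meets
  exactly once, so the total costs of these \<open>m\<close> allocations add up to at most
  \<open>\<Sum>a b. c_a(B_b) = \<Sum>a. c_a([n])\<close>, and one of them is at most the average.
  The payment inequality only uses \<open>\<Sum>j. p_j \<le> 0\<close> and \<open>\<Sum>j. c_i(A_j) = c_i([n])\<close>.\<close>

lemma cost_empty [simp]: "cost c i {} = 0"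
  by (simp add: cost_def)

lemma cost_Un_disjoint:
  "finite S \<Longrightarrow> finite T \<Longrightarrow> S \<inter> T = {} \<Longrightarrow> cost c i (S \<union> T) = cost c i S + cost c i T"
  unfolding cost_def by (rule sum.union_disjoint)

lemma cost_nonneg: "\<forall>j\<in>{1..n}. 0 \<le> c i j \<Longrightarrow> S \<subseteq> {1..n} \<Longrightarrow> 0 \<le> cost c i S"
  unfolding cost_def by (rule sum_nonneg) auto

lemma allocation_subset: "is_allocation m n X \<Longrightarrow> i \<in> {1..m} \<Longrightarrow> X i \<subseteq> {1..n}"
  unfolding is_allocation_def by blast

lemma finite_allocation: "is_allocation m n X \<Longrightarrow> i \<in> {1..m} \<Longrightarrow> finite (X i)"
  by (meson allocation_subset finite_atLeastAtMost finite_subset)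

lemma allocation_disjoint:
  "is_allocation m n X \<Longrightarrow> i \<in> {1..m} \<Longrightarrow> k \<in> {1..m} \<Longrightarrow> i \<noteq> k \<Longrightarrow> X i \<inter> X k = {}"
  unfolding is_allocation_def by blast

lemma cost_all_eq_sum_allocation:
  assumes "is_allocation m n X"
  shows "cost c i {1..n} = (\<Sum>k\<in>{1..m}. cost c i (X k))"
proof -
  have "{1..n} = (\<Union>k\<in>{1..m}. X k)"
    using assms unfolding is_allocation_def by blast
  then show ?thesis
    unfolding cost_def
    using finite_allocation[OF assms] allocation_disjoint[OF assms]
    by (simp add: sum.UNION_disjoint)
qed

lemma cost_le_makespan: "i \<in> {1..m} \<Longrightarrow> cost c i (X i) \<le> makespan m c X"
  unfolding makespan_def by (rule Max_ge) auto

lemma makespan_le: "1 \<le> m \<Longrightarrow> \<forall>i\<in>{1..m}. cost c i (X i) \<le> t \<Longrightarrow> makespan m c X \<le> t"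
  unfolding makespan_def by (subst Max_le_iff) auto

text \<open>Machine \<open>a\<close> holds \<open>S\<close> and machine \<open>b\<close> holds \<open>T\<close>; after the trade \<open>a\<close> holds
  \<open>share c M a b S T\<close> and \<open>b\<close> holds \<open>share c M b a T S\<close>.\<close>

definition share :: "(nat \<Rightarrow> nat \<Rightarrow> real) \<Rightarrow> real \<Rightarrow> nat \<Rightarrow> nat \<Rightarrow> nat set \<Rightarrow> nat set \<Rightarrow> nat set" where
  "share c M a b S T =
     (if cost c a T \<le> 3/2 * M \<and> cost c b S \<le> 3/2 * M then T
      else if cost c b S > 3/2 * M \<and> cost c a T < M/2 then S \<union> T
      else if cost c a T > 3/2 * M \<and> cost c b S < M/2 then {}
      else S)"

lemma share_subset: "share c M a b S T \<subseteq> S \<union> T"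
  by (auto simp: share_def)

lemma share_Un: "0 \<le> M \<Longrightarrow> share c M a b S T \<union> share c M b a T S = S \<union> T"
  by (auto simp: share_def)

lemma share_disjoint: "0 \<le> M \<Longrightarrow> S \<inter> T = {} \<Longrightarrow> share c M a b S T \<inter> share c M b a T S = {}"
  by (auto simp: share_def)

lemma share_cost_le:
  assumes "finite S" "finite T" "S \<inter> T = {}" "0 \<le> M" "cost c a S \<le> M"
  shows "cost c a (share c M a b S T) \<le> 3/2 * M"
  using assms by (auto simp: share_def cost_Un_disjoint)

text \<open>If no swap happens and nobody takes everything, one swapped cost exceeds \<open>3/2 * M\<close> and the
  other is at least \<open>M/2\<close>, whereas keeping the bundles costs at most \<open>2 * M\<close>.\<close>

lemma share_cost_add_le:
  assumes "finite S" "finite T" "S \<inter> T = {}" "0 \<le> M" "cost c a S \<le> M" "cost c b T \<le> M"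
  shows "cost c a (share c M a b S T) + cost c b (share c M b a T S) \<le> cost c a T + cost c b S"
  using assms by (auto simp: share_def cost_Un_disjoint Un_commute inf_commute)

definition trade :: "(nat \<Rightarrow> nat \<Rightarrow> real) \<Rightarrow> real \<Rightarrow> (nat \<Rightarrow> nat set) \<Rightarrow> nat \<Rightarrow> nat \<Rightarrow> nat set" where
  "trade c M B a b = (if a = b then B a else share c M a b (B a) (B b))"

lemma trade_subset: "trade c M B a b \<subseteq> B a \<union> B b"
  using share_subset by (simp add: trade_def)

lemma trade_Un: "0 \<le> M \<Longrightarrow> trade c M B a b \<union> trade c M B b a = B a \<union> B b"
  using share_Un by (simp add: trade_def)

lemma trade_disjoint:
  "0 \<le> M \<Longrightarrow> a \<noteq> b \<Longrightarrow> B a \<inter> B b = {} \<Longrightarrow> trade c M B a b \<inter> trade c M B b a = {}"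
  using share_disjoint by (simp add: trade_def)

lemma trade_cost_le:
  assumes B: "is_allocation m n B" and "a \<in> {1..m}" "b \<in> {1..m}"
    and "0 \<le> M" "cost c a (B a) \<le> M"
  shows "cost c a (trade c M B a b) \<le> 3/2 * M"
proof (cases "a = b")
  case False
  then show ?thesis
    using assms finite_allocation[OF B] allocation_disjoint[OF B]
      share_cost_le[of "B a" "B b" M c a b] by (simp add: trade_def)
qed (use assms in \<open>simp add: trade_def\<close>)

lemma sum_trade_cost_le:
  assumes B: "is_allocation m n B" and "0 \<le> M" and own: "\<forall>a\<in>{1..m}. cost c a (B a) \<le> M"
  shows "(\<Sum>a\<in>{1..m}. \<Sum>b\<in>{1..m}. cost c a (trade c M B a b)) \<le> (\<Sum>a\<in>{1..m}. cost c a {1..n})"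
proof -
  let ?I = "{1..m}"
  define F where "F a b = cost c a (trade c M B a b)" for a b
  have pair: "F a b + F b a \<le> cost c a (B b) + cost c b (B a)" if "a \<in> ?I" "b \<in> ?I" for a b
  proof (cases "a = b")
    case False
    then show ?thesis
      using that own finite_allocation[OF B] allocation_disjoint[OF B] \<open>0 \<le> M\<close>
        share_cost_add_le[of "B a" "B b" M c a b] by (simp add: F_def trade_def)
  qed (simp add: F_def trade_def)
  have "2 * (\<Sum>a\<in>?I. \<Sum>b\<in>?I. F a b) = (\<Sum>a\<in>?I. \<Sum>b\<in>?I. F a b + F b a)"
    by (simp add: sum.distrib sum.swap[of F])
  also have "\<dots> \<le> (\<Sum>a\<in>?I. \<Sum>b\<in>?I. cost c a (B b) + cost c b (B a))"
    using pair by (intro sum_mono) auto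
  also have "\<dots> = 2 * (\<Sum>a\<in>?I. \<Sum>b\<in>?I. cost c a (B b))"
    by (simp add: sum.distrib sum.swap[of "\<lambda>a b. cost c b (B a)"])
  also have "\<dots> = 2 * (\<Sum>a\<in>?I. cost c a {1..n})"
    using cost_all_eq_sum_allocation[OF B] by simp
  finally show ?thesis by (simp add: F_def)
qed

lemma allocation_trade_involution:
  assumes B: "is_allocation m n B" and "0 \<le> M"
    and \<sigma>: "\<And>a. a \<in> {1..m} \<Longrightarrow> \<sigma> a \<in> {1..m}" "\<And>a. a \<in> {1..m} \<Longrightarrow> \<sigma> (\<sigma> a) = a"
  shows "is_allocation m n (\<lambda>a. trade c M B a (\<sigma> a))"
  unfolding is_allocation_def
proof (intro conjI ballI impI)
  fix i k assume ik: "i \<in> {1..m}" "k \<in> {1..m}" "i \<noteq> k"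
  show "trade c M B i (\<sigma> i) \<inter> trade c M B k (\<sigma> k) = {}"
  proof (cases "\<sigma> i = k")
    case True
    then show ?thesis
      using trade_disjoint[OF \<open>0 \<le> M\<close>] allocation_disjoint[OF B] ik \<sigma>(2)[of i] by auto
  next
    case False
    then have "\<sigma> k \<noteq> i" "\<sigma> i \<noteq> \<sigma> k"
      using \<sigma>(2) ik by metis+
    then have "(B i \<union> B (\<sigma> i)) \<inter> (B k \<union> B (\<sigma> k)) = {}"
      using False allocation_disjoint[OF B] ik \<sigma>(1) by blast
    then show ?thesis
      using trade_subset[of c M B] by blast
  qed
next
  show "(\<Union>i\<in>{1..m}. trade c M B i (\<sigma> i)) = {1..n}"
  proof (rule antisym)
    show "(\<Union>i\<in>{1..m}. trade c M B i (\<sigma> i)) \<subseteq> {1..n}"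
      using trade_subset[of c M B] allocation_subset[OF B] \<sigma>(1) by blast
    show "{1..n} \<subseteq> (\<Union>i\<in>{1..m}. trade c M B i (\<sigma> i))"
    proof
      fix j assume "j \<in> {1..n}"
      then obtain a where a: "a \<in> {1..m}" "j \<in> B a"
        using B unfolding is_allocation_def by blast
      then have "j \<in> trade c M B a (\<sigma> a) \<union> trade c M B (\<sigma> a) (\<sigma> (\<sigma> a))"
        using trade_Un[OF \<open>0 \<le> M\<close>] \<sigma>(2) by auto
      then show "j \<in> (\<Union>i\<in>{1..m}. trade c M B i (\<sigma> i))"
        using a(1) \<sigma>(1)[OF a(1)] by blast
    qed
  qed
qed

text \<open>Round-robin pairings: for each \<open>r < m\<close>, \<open>partner m r\<close> matches \<open>a\<close> with the unique
  \<open>b \<in> {1..m}\<close> satisfying \<open>a + b \<equiv> r (mod m)\<close>.\<close>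

definition partner :: "nat \<Rightarrow> nat \<Rightarrow> nat \<Rightarrow> nat" where
  "partner m r a = nat ((int r - int a - 1) mod int m) + 1"

lemma partner_in_range: "0 < m \<Longrightarrow> partner m r a \<in> {1..m}"
proof -
  assume "0 < m"
  then have "0 \<le> (int r - int a - 1) mod int m" "(int r - int a - 1) mod int m < int m"
    by simp_all
  then show ?thesis
    unfolding partner_def by (simp add: Suc_le_eq nat_less_iff)
qed

lemma add_partner_mod: "0 < m \<Longrightarrow> (a + partner m r a) mod m = r mod m"
proof -
  assume m: "0 < m"
  have "int ((a + partner m r a) mod m) = ((int r - int a - 1) mod int m + (int a + 1)) mod int m"
    unfolding partner_def using m by (simp add: zmod_int ac_simps)
  also have "\<dots> = int r mod int m"
    by (simp add: mod_add_left_eq)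
  finally show ?thesis
    by (metis of_nat_eq_iff of_nat_mod)
qed

lemma add_mod_cancel_in_range:
  fixes a b b' m :: nat
  assumes "b \<in> {1..m}" "b' \<in> {1..m}" "(a + b) mod m = (a + b') mod m"
  shows "b = b'"
proof (rule ccontr)
  assume "b \<noteq> b'"
  have "int (a + b) mod int m = int (a + b') mod int m"
    using assms(3) by (metis of_nat_mod)
  then have "int m dvd int b - int b'"
    by (simp add: mod_eq_dvd_iff)
  then have "int m \<le> \<bar>int b - int b'\<bar>"
    using \<open>b \<noteq> b'\<close> dvd_imp_le_int[of "int b - int b'" "int m"] by simp
  then show False
    using assms(1,2) by auto
qed

lemma partner_partner: "0 < m \<Longrightarrow> a \<in> {1..m} \<Longrightarrow> partner m r (partner m r a) = a"
  using add_mod_cancel_in_range[of "partner m r (partner m r a)" m a "partner m r a"]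
    partner_in_range add_partner_mod by (simp add: add.commute)

lemma bij_betw_partner: "0 < m \<Longrightarrow> bij_betw (\<lambda>r. partner m r a) {..<m} {1..m}"
proof -
  assume m: "0 < m"
  have "inj_on (\<lambda>r. partner m r a) {..<m}"
    by (rule inj_onI) (metis add_partner_mod[OF m] lessThan_iff mod_less)
  moreover have "(\<lambda>r. partner m r a) ` {..<m} \<subseteq> {1..m}"
    using partner_in_range[OF m] by blast
  ultimately show ?thesis
    by (simp add: bij_betw_def card_image card_subset_eq)
qed

lemma ex_le_average:
  fixes f :: "'a \<Rightarrow> real"
  assumes "finite I" "I \<noteq> {}" "sum f I \<le> real (card I) * t"
  shows "\<exists>r\<in>I. f r \<le> t"
proof (rule ccontr)
  assume "\<not> (\<exists>r\<in>I. f r \<le> t)"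
  then have "(\<Sum>r\<in>I. t) < sum f I"
    using assms(1,2) by (intro sum_strict_mono) auto
  then show False
    using assms(3) by simp
qed

lemma ex_allocation_cost_le_average:
  assumes m: "1 \<le> m" and c: "\<forall>i\<in>{1..m}. \<forall>j\<in>{1..n}. 0 \<le> c i j" and B: "is_allocation m n B"
  shows "\<exists>A. is_allocation m n A
            \<and> (\<Sum>i\<in>{1..m}. cost c i (A i)) \<le> (1 / real m) * (\<Sum>i\<in>{1..m}. cost c i {1..n})
            \<and> makespan m c A \<le> 3 / 2 * makespan m c B"
proof -
  define M where "M = makespan m c B"
  define A where "A r a = trade c M B a (partner m r a)" for r a
  have m0: "0 < m" using m by simp
  have own: "\<forall>a\<in>{1..m}. cost c a (B a) \<le> M"
    using cost_le_makespan unfolding M_def by blast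
  have "0 \<le> cost c 1 (B 1)" "cost c 1 (B 1) \<le> M"
    using cost_nonneg[of n c 1 "B 1"] c allocation_subset[OF B, of 1] own m by simp_all
  then have M0: "0 \<le> M"
    by linarith
  define T where "T = (1 / real m) * (\<Sum>i\<in>{1..m}. cost c i {1..n})"
  have "(\<Sum>r<m. \<Sum>a\<in>{1..m}. cost c a (A r a)) = (\<Sum>a\<in>{1..m}. \<Sum>r<m. cost c a (A r a))"
    by (rule sum.swap)
  also have "\<dots> = (\<Sum>a\<in>{1..m}. \<Sum>b\<in>{1..m}. cost c a (trade c M B a b))"
    unfolding A_def using bij_betw_partner[OF m0]
    by (intro sum.cong refl sum.reindex_bij_betw) auto
  also have "\<dots> \<le> real (card {..<m}) * T"
    using sum_trade_cost_le[OF B M0 own] m0 unfolding T_def by simp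
  finally have "\<exists>r\<in>{..<m}. (\<Sum>a\<in>{1..m}. cost c a (A r a)) \<le> T"
    using m0 by (intro ex_le_average) auto
  then obtain r where total: "(\<Sum>a\<in>{1..m}. cost c a (A r a)) \<le> T"
    by blast
  have "is_allocation m n (A r)"
    unfolding A_def
    by (rule allocation_trade_involution[OF B M0]) (use partner_in_range partner_partner m0 in blast)+
  moreover have "cost c a (A r a) \<le> 3/2 * M" if "a \<in> {1..m}" for a
    unfolding A_def using trade_cost_le[OF B that partner_in_range[OF m0] M0] own that by blast
  then have "makespan m c (A r) \<le> 3/2 * M"
    using makespan_le[OF m] by blast
  ultimately show ?thesis
    using total unfolding M_def T_def by blast
qed

lemma cost_minus_payment_le_average:
  assumes A: "is_allocation m n A"
    and total: "(\<Sum>i\<in>{1..m}. cost c i (A i)) \<le> (1 / real m) * (\<Sum>i\<in>{1..m}. cost c i {1..n})"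
    and p: "p = (\<lambda>i. cost c i (A i) - (1 / real m) * cost c i {1..n})"
  shows "cost c i (A i) - p i \<le> (1 / real m) * (\<Sum>j\<in>{1..m}. cost c i (A j) - p j)"
proof -
  have "(\<Sum>j\<in>{1..m}. p j) \<le> 0"
    using total unfolding p by (simp add: sum_subtractf sum_distrib_left)
  then have "cost c i {1..n} \<le> (\<Sum>j\<in>{1..m}. cost c i (A j) - p j)"
    using cost_all_eq_sum_allocation[OF A] by (simp add: sum_subtractf)
  then show ?thesis
    unfolding p by (simp add: divide_right_mono)
qed

theorem mainTheorem2:
  fixes m n :: nat and c :: "nat \<Rightarrow> nat \<Rightarrow> real" and B :: "nat \<Rightarrow> nat set"
  assumes "m \<ge> 2" and "n \<ge> 2"
    and "\<forall>i\<in>{1..m}. \<forall>j\<in>{1..n}. c i j \<ge> 0"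
    and "is_allocation m n B"
  shows "(\<exists>A. is_allocation m n A
            \<and> (\<Sum>i\<in>{1..m}. cost c i (A i)) \<le> (1 / real m) * (\<Sum>i\<in>{1..m}. cost c i {1..n})
            \<and> makespan m c A \<le> 3 / 2 * makespan m c B)
       \<and> (\<forall>A. is_allocation m n A
            \<and> (\<Sum>i\<in>{1..m}. cost c i (A i)) \<le> (1 / real m) * (\<Sum>i\<in>{1..m}. cost c i {1..n})
            \<and> makespan m c A \<le> 3 / 2 * makespan m c B
            \<longrightarrow> (let p = (\<lambda>i. cost c i (A i) - (1 / real m) * cost c i {1..n}) in
                 \<forall>i\<in>{1..m}. cost c i (A i) - p i
                    \<le> (1 / real m) * (\<Sum>j\<in>{1..m}. cost c i (A j) - p j)))"
proof -
  have m: "1 \<le> m" using assms(1) by simp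
  show ?thesis
    using ex_allocation_cost_le_average[OF m assms(3,4)]
      cost_minus_payment_le_average by (auto simp: Let_def)
qed

end
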